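(* Let the setting be as in the context and suppose that $F_c$ satisfies $\lim_{n\to\infty} n\,\bar F_c(\tau_{F_c}-\xi/\sqrt n)=\infty$ for every $\xi>0$. Then $\tau_H=\tau_{F_c}<\infty$ and $\sqrt n\,(\tau_H-t_{(n)})\to 0$ in probability as $n\to\infty$, where $t_{(n)}=\max_{1\le i\le n}Y_i$.
   Context: $T\in[0,\infty]$ and $C\ge0$ are independent; $T$ has improper distribution function $F(t)=\mathbb P(T\le t)=pF_0(t)$ with $0<p<1$ and $F_0$ a proper distribution function, and $C$ has distribution function $F_c$. $Y=\min(T,C)$ has distribution function $H$ with $1-H=(1-F)(1-F_c)$. For a distribution function $G$, $\bar G=1-G$ and $\tau_G=\sup\{t\ge0:G(t)<1\}$. $Y_1,\dots,Y_n$ are i.i.d. copies of $Y$. *)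

theory Defs
  imports "HOL-Probability.Probability"
begin

text \<open>Right endpoint of a distribution function G on [0,\<infinity>):
  tau_G = sup {t \<ge> 0 : G t < 1}, with the convention sup of the empty set = 0
  (all distributions here live on [0,\<infinity>]).\<close>
definition tau :: "(real \<Rightarrow> real) \<Rightarrow> ereal" where
  "tau G = Sup ({0} \<union> {ereal t | t. t \<ge> 0 \<and> G t < 1})"

definition survival :: "(real \<Rightarrow> real) \<Rightarrow> ereal \<Rightarrow> real" where
  "survival G x = (case x of ereal r \<Rightarrow> 1 - G r | PInfty \<Rightarrow> 0 | MInfty \<Rightarrow> 1)"

definition proper_dist_fun :: "(real \<Rightarrow> real) \<Rightarrow> bool" where
  "proper_dist_fun G \<longleftrightarrow> mono G \<and> (\<forall>t. continuous (at_right t) G)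
     \<and> (G \<longlongrightarrow> 0) at_bot \<and> (G \<longlongrightarrow> 1) at_top"

end

theory Submission
  imports Defs
begin

text \<open>Independence gives \<open>1 - H(s) = P(T > s) (1 - F\<^sub>c(s))\<close> with \<open>P(T > s) \<ge> 1 - p > 0\<close>, so
  \<open>H\<close> and \<open>F\<^sub>c\<close> reach \<open>1\<close> at the same points and have the same right endpoint \<open>r\<close>, which the
  growth condition forces to be finite. No observation exceeds \<open>r\<close>, so the sample maximum
  falls more than \<open>\<epsilon>/\<surd>n\<close> short of \<open>r\<close> only if all \<open>n\<close> observations lie below \<open>r - \<epsilon>/\<surd>n\<close>.
  This has probability \<open>H(r - \<epsilon>/\<surd>n)\<^sup>n \<le> exp (-(1 - p) n (1 - F\<^sub>c(r - \<epsilon>/\<surd>n)))\<close>, which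
  tends to \<open>0\<close> by the growth condition.\<close>

lemma one_minus_pow_le_exp:
  fixes x :: real
  assumes "0 \<le> x" "x \<le> 1"
  shows "(1 - x) ^ n \<le> exp (- (real n * x))"
proof -
  have "(1 - x) ^ n \<le> exp (- x) ^ n"
    using assms exp_ge_add_one_self[of "- x"] by (intro power_mono) auto
  also have "\<dots> = exp (- (real n * x))"
    by (simp add: exp_of_nat_mult[symmetric])
  finally show ?thesis .
qed

lemma tau_nonneg: "0 \<le> tau G"
  unfolding tau_def by (intro Sup_upper) auto

lemma tau_less_PInfty_if_survival_tendsto:
  assumes "((\<lambda>n. ereal (real n * survival G (tau G - ereal (\<xi> / sqrt (real n))))) \<longlongrightarrow> \<infinity>) sequentially"
  shows "tau G < \<infinity>"
proof (rule ccontr)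
  assume "\<not> tau G < \<infinity>"
  then have "((\<lambda>n. ereal 0) \<longlongrightarrow> \<infinity>) sequentially"
    using assms by (simp add: survival_def)
  then have "LIM n sequentially. (0::real) :> at_top"
    by (simp add: tendsto_PInfty_eq_at_top)
  then have "eventually (\<lambda>n. (1::real) \<le> 0) sequentially"
    unfolding filterlim_at_top by blast
  then show False
    by simp
qed

lemma cdf_eq_one_at_tau:
  assumes "real_distribution D" and "tau (cdf D) = ereal r"
  shows "cdf D r = 1"
proof -
  interpret real_distribution D by fact
  have "0 \<le> r"
    using tau_nonneg[of "cdf D"] assms(2) by simp
  have "cdf D t = 1" if "r < t" for t
  proof (rule ccontr)
    assume "cdf D t \<noteq> 1"
    then have "ereal t \<le> tau (cdf D)"
      using cdf_bounded_prob[of t] that \<open>0 \<le> r\<close>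
      unfolding tau_def by (intro Sup_upper) auto
    then show False using assms(2) that by simp
  qed
  then have "(cdf D \<longlongrightarrow> 1) (at_right r)"
    by (intro tendsto_eventually eventually_at_rightI[of r "r + 1"]) auto
  moreover have "(cdf D \<longlongrightarrow> cdf D r) (at_right r)"
    using cdf_is_right_cont[of r] unfolding continuous_within .
  ultimately show ?thesis
    using tendsto_unique[OF trivial_limit_at_right_real] by blast
qed

lemma proper_dist_fun_le_one:
  assumes "proper_dist_fun G"
  shows "G t \<le> 1"
proof -
  have "mono G" "(G \<longlongrightarrow> 1) at_top"
    using assms unfolding proper_dist_fun_def by auto
  moreover have "eventually (\<lambda>s. G t \<le> G s) at_top"
    using \<open>mono G\<close> by (auto simp: eventually_at_top_linorder mono_def)
  ultimately show ?thesis
    by (intro tendsto_lowerbound[of G 1 at_top]) auto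
qed

lemma (in prob_space) one_minus_cdf_distr:
  assumes "X \<in> borel_measurable M"
  shows "1 - cdf (distr M borel X) s = prob {\<omega>\<in>space M. s < X \<omega>}"
proof -
  have "{\<omega>\<in>space M. s < X \<omega>} = space M - (X -` {..s} \<inter> space M)"
    by auto
  moreover have "X -` {..s} \<inter> space M \<in> events"
    using assms by measurable
  ultimately show ?thesis
    using assms by (simp add: cdf_def measure_distr prob_compl)
qed

lemma (in prob_space) survival_censored_min:
  assumes T: "T \<in> borel_measurable M" and C: "C \<in> borel_measurable M"
    and indep: "indep_var borel T borel (\<lambda>\<omega>. ereal (C \<omega>))"
    and T_finite: "\<And>\<omega>. \<omega> \<in> space M \<Longrightarrow> T \<omega> \<noteq> -\<infinity>"
  shows "1 - cdf (distr M borel (\<lambda>\<omega>. real_of_ereal (min (T \<omega>) (ereal (C \<omega>))))) s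
    = prob {\<omega>\<in>space M. ereal s < T \<omega>} * (1 - cdf (distr M borel C) s)"
proof -
  have min_gt: "s < real_of_ereal (min (T \<omega>) (ereal (C \<omega>))) \<longleftrightarrow> ereal s < T \<omega> \<and> s < C \<omega>"
    if "\<omega> \<in> space M" for \<omega>
    using T_finite[OF that] by (cases "T \<omega>") (auto simp: min_def)
  have "prob ((\<lambda>\<omega>. (T \<omega>, ereal (C \<omega>))) -` ({ereal s<..} \<times> {ereal s<..}) \<inter> space M)
    = prob (T -` {ereal s<..} \<inter> space M) * prob ((\<lambda>\<omega>. ereal (C \<omega>)) -` {ereal s<..} \<inter> space M)"
    by (rule indep_varD[OF indep]) auto
  moreover have "(\<lambda>\<omega>. (T \<omega>, ereal (C \<omega>))) -` ({ereal s<..} \<times> {ereal s<..}) \<inter> space M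
    = {\<omega>\<in>space M. s < real_of_ereal (min (T \<omega>) (ereal (C \<omega>)))}"
    using min_gt by auto
  moreover have "(\<lambda>\<omega>. ereal (C \<omega>)) -` {ereal s<..} \<inter> space M = {\<omega>\<in>space M. s < C \<omega>}"
    by auto
  ultimately show ?thesis
    using T C by (simp add: one_minus_cdf_distr vimage_def Int_def conj_commute)
qed

lemma (in prob_space) prob_max_deviation_le:
  fixes X :: "nat \<Rightarrow> 'a \<Rightarrow> real"
  assumes indep: "indep_vars (\<lambda>_. borel) X UNIV" and "0 < n"
    and top: "\<And>i. cdf (distr M borel (X i)) r = 1"
    and below: "\<And>i. cdf (distr M borel (X i)) (r - \<delta>) \<le> q"
  shows "prob {\<omega>\<in>space M. \<delta> < \<bar>r - Max ((\<lambda>i. X i \<omega>) ` {0..<n})\<bar>} \<le> q ^ n"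
proof -
  have rv: "X i \<in> borel_measurable M" for i
    using indep by (simp add: indep_vars_def)
  define A where "A i = X i -` {r<..} \<inter> space M" for i
  define B where "B i = X i -` {..r - \<delta>} \<inter> space M" for i
  have A_ev: "A i \<in> events" and B_ev: "B i \<in> events" for i
    unfolding A_def B_def using rv by measurable
  have A_null: "prob (A i) = 0" for i
    using one_minus_cdf_distr[OF rv, of i r] top[of i] by (simp add: A_def vimage_def Int_def conj_commute)
  have sub: "{\<omega>\<in>space M. \<delta> < \<bar>r - Max ((\<lambda>i. X i \<omega>) ` {0..<n})\<bar>}
    \<subseteq> (\<Union>i<n. A i) \<union> (\<Inter>i<n. B i)"
  proof
    fix \<omega> assume "\<omega> \<in> {\<omega>\<in>space M. \<delta> < \<bar>r - Max ((\<lambda>i. X i \<omega>) ` {0..<n})\<bar>}"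
    then have \<omega>: "\<omega> \<in> space M" "\<delta> < \<bar>r - Max ((\<lambda>i. X i \<omega>) ` {0..<n})\<bar>"
      by auto
    show "\<omega> \<in> (\<Union>i<n. A i) \<union> (\<Inter>i<n. B i)"
    proof (cases "\<omega> \<in> (\<Inter>i<n. B i)")
      case False
      then obtain j where "j < n" "r - \<delta> < X j \<omega>"
        using \<omega>(1) \<open>0 < n\<close> by (auto simp: B_def not_le lessThan_empty_iff)
      moreover have "X j \<omega> \<le> Max ((\<lambda>i. X i \<omega>) ` {0..<n})"
        using \<open>j < n\<close> by (intro Max_ge) auto
      ultimately have "r < Max ((\<lambda>i. X i \<omega>) ` {0..<n})"
        using \<omega>(2) by linarith
      moreover have "Max ((\<lambda>i. X i \<omega>) ` {0..<n}) \<in> (\<lambda>i. X i \<omega>) ` {0..<n}"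
        using \<open>0 < n\<close> by (intro Max_in) auto
      ultimately show ?thesis
        using \<omega>(1) by (auto simp: A_def)
    qed simp
  qed
  have U_ev: "(\<Union>i<n. A i) \<in> events" and I_ev: "(\<Inter>i<n. B i) \<in> events"
    using A_ev B_ev \<open>0 < n\<close> by (auto intro!: sets.finite_INT simp: lessThan_empty_iff)
  have "prob {\<omega>\<in>space M. \<delta> < \<bar>r - Max ((\<lambda>i. X i \<omega>) ` {0..<n})\<bar>}
    \<le> prob (\<Union>i<n. A i) + prob (\<Inter>i<n. B i)"
    using sub U_ev I_ev by (intro order.trans[OF finite_measure_mono measure_Un_le]) auto
  also have "prob (\<Union>i<n. A i) = 0"
    using finite_measure_subadditive_finite[of "{..<n}" A] A_ev A_null
    by (simp add: image_subset_iff measure_le_0_iff)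
  also have "prob (\<Inter>i<n. B i) = (\<Prod>i<n. prob (B i))"
    unfolding B_def using \<open>0 < n\<close> by (intro indep_varsD[OF indep]) auto
  also have "\<dots> \<le> q ^ n"
    using prod_mono[of "{..<n}" "\<lambda>i. prob (B i)" "\<lambda>_. q"] below rv
    by (simp add: B_def cdf_def measure_distr)
  finally show ?thesis by simp
qed

lemma (in prob_space) sqrt_scaled_max_deviation_tendsto_zero:
  fixes X :: "nat \<Rightarrow> 'a \<Rightarrow> real"
  assumes indep: "indep_vars (\<lambda>_. borel) X UNIV"
    and cdf: "\<And>i. cdf (distr M borel (X i)) = G" and "G r = 1"
    and growth: "LIM n sequentially. real n * (1 - G (r - \<epsilon> / sqrt (real n))) :> at_top"
  shows "((\<lambda>n. prob {\<omega>\<in>space M. \<epsilon> < \<bar>sqrt (real n) * (r - Max ((\<lambda>i. X i \<omega>) ` {0..<n}))\<bar>})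
    \<longlongrightarrow> 0) sequentially"
proof (rule tendsto_sandwich[OF _ _ tendsto_const])
  define a where "a n = 1 - G (r - \<epsilon> / sqrt (real n))" for n :: nat
  interpret X0: real_distribution "distr M borel (X 0)"
    using indep by (simp add: indep_vars_def)
  have a_bounds: "0 \<le> a n" "a n \<le> 1" for n
    using X0.cdf_nonneg X0.cdf_bounded_prob cdf[of 0] by (auto simp: a_def)
  show "\<forall>\<^sub>F n in sequentially. prob {\<omega>\<in>space M. \<epsilon> < \<bar>sqrt (real n) * (r - Max ((\<lambda>i. X i \<omega>) ` {0..<n}))\<bar>}
    \<le> exp (- (real n * a n))"
  proof (rule eventually_sequentiallyI)
    fix n :: nat assume "1 \<le> n"
    then have "0 < sqrt (real n)" by simp
    then have "{\<omega>\<in>space M. \<epsilon> < \<bar>sqrt (real n) * (r - Max ((\<lambda>i. X i \<omega>) ` {0..<n}))\<bar>}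
      = {\<omega>\<in>space M. \<epsilon> / sqrt (real n) < \<bar>r - Max ((\<lambda>i. X i \<omega>) ` {0..<n})\<bar>}"
      by (simp add: abs_mult pos_divide_less_eq mult.commute)
    also have "prob \<dots> \<le> (1 - a n) ^ n"
      using \<open>1 \<le> n\<close> \<open>G r = 1\<close> cdf by (intro prob_max_deviation_le[OF indep]) (auto simp: a_def)
    also have "\<dots> \<le> exp (- (real n * a n))"
      using a_bounds by (rule one_minus_pow_le_exp)
    finally show "prob {\<omega>\<in>space M. \<epsilon> < \<bar>sqrt (real n) * (r - Max ((\<lambda>i. X i \<omega>) ` {0..<n}))\<bar>}
      \<le> exp (- (real n * a n))" .
  qed
  have "LIM n sequentially. - (real n * a n) :> at_bot"
    using growth by (simp add: a_def filterlim_uminus_at_top)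
  then show "((\<lambda>n. exp (- (real n * a n))) \<longlongrightarrow> 0) sequentially"
    by (rule filterlim_compose[OF exp_at_bot])
qed (simp add: measure_nonneg)

theorem mainTheorem2:
  fixes M :: "'a measure"
    and T :: "'a \<Rightarrow> ereal" and C :: "'a \<Rightarrow> real"
    and p :: real and F0 :: "real \<Rightarrow> real"
    and Ys :: "nat \<Rightarrow> 'a \<Rightarrow> real"
  assumes "prob_space M"
    and T_rv: "T \<in> borel_measurable M" and C_rv: "C \<in> borel_measurable M"
    and T_nonneg: "\<forall>\<omega>\<in>space M. T \<omega> \<ge> 0"
    and C_nonneg: "\<forall>\<omega>\<in>space M. C \<omega> \<ge> 0"
    and indep_TC: "prob_space.indep_var M borel T borel (\<lambda>\<omega>. ereal (C \<omega>))"
    and p: "0 < p" "p < 1"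
    and F0: "proper_dist_fun F0"
    and F: "\<forall>t. measure M {\<omega>\<in>space M. T \<omega> \<le> ereal t} = p * F0 t"
    and Ys_rv: "\<forall>i. Ys i \<in> borel_measurable M"
    and Ys_indep: "prob_space.indep_vars M (\<lambda>_. borel) Ys UNIV"
    and Ys_dist: "\<forall>i. distr M borel (Ys i)
                      = distr M borel (\<lambda>\<omega>. real_of_ereal (min (T \<omega>) (ereal (C \<omega>))))"
    and cond: "\<forall>\<xi>>0. ((\<lambda>n. ereal (real n * survival (cdf (distr M borel C))
                         (tau (cdf (distr M borel C)) - ereal (\<xi> / sqrt (real n)))))
                       \<longlongrightarrow> \<infinity>) sequentially"
  shows "tau (cdf (distr M borel (\<lambda>\<omega>. real_of_ereal (min (T \<omega>) (ereal (C \<omega>))))))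
           = tau (cdf (distr M borel C))
       \<and> tau (cdf (distr M borel C)) < \<infinity>
       \<and> (\<forall>\<epsilon>>0. ((\<lambda>n. measure M {\<omega>\<in>space M.
              \<bar>sqrt (real n) * (real_of_ereal (tau (cdf (distr M borel
                   (\<lambda>\<omega>. real_of_ereal (min (T \<omega>) (ereal (C \<omega>)))))))
                 - Max ((\<lambda>i. Ys i \<omega>) ` {0..<n}))\<bar> > \<epsilon>}) \<longlongrightarrow> 0) sequentially)"
proof -
  interpret prob_space M by fact
  define Y where "Y \<omega> = real_of_ereal (min (T \<omega>) (ereal (C \<omega>)))" for \<omega>
  define Fc where "Fc = cdf (distr M borel C)"
  define H where "H = cdf (distr M borel Y)"
  have T_gt: "1 - p \<le> prob {\<omega>\<in>space M. ereal s < T \<omega>}" for s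
  proof -
    have "{\<omega>\<in>space M. ereal s < T \<omega>} = space M - {\<omega>\<in>space M. T \<omega> \<le> ereal s}"
      by auto
    moreover have "{\<omega>\<in>space M. T \<omega> \<le> ereal s} \<in> events"
      using T_rv by measurable
    ultimately have "prob {\<omega>\<in>space M. ereal s < T \<omega>} = 1 - p * F0 s"
      using F by (simp add: prob_compl)
    then show ?thesis
      using proper_dist_fun_le_one[OF F0, of s] p by (simp add: mult_left_le)
  qed
  have surv_H: "1 - H s = prob {\<omega>\<in>space M. ereal s < T \<omega>} * (1 - Fc s)" for s
    unfolding H_def Fc_def Y_def using T_nonneg
    by (intro survival_censored_min[OF T_rv C_rv indep_TC]) auto
  have Fc_le_1: "Fc s \<le> 1" for s
    unfolding Fc_def using C_rv by (intro real_distribution.cdf_bounded_prob) simp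
  have H_lower: "(1 - p) * (1 - Fc s) \<le> 1 - H s" for s
    unfolding surv_H using T_gt[of s] Fc_le_1[of s] by (simp add: mult_right_mono)
  have "H s < 1 \<longleftrightarrow> Fc s < 1" for s
  proof -
    have "0 < prob {\<omega>\<in>space M. ereal s < T \<omega>}"
      using T_gt[of s] p by linarith
    then have "0 < 1 - H s \<longleftrightarrow> 0 < 1 - Fc s"
      unfolding surv_H by (simp add: zero_less_mult_iff)
    then show ?thesis
      by linarith
  qed
  then have tau_H: "tau H = tau Fc"
    unfolding tau_def by simp
  have tau_fin: "tau Fc < \<infinity>"
    using cond by (intro tau_less_PInfty_if_survival_tendsto[of _ 1]) (simp add: Fc_def)
  then obtain r where r: "tau Fc = ereal r"
    using tau_nonneg[of Fc] by (cases "tau Fc") auto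
  then have "H r = 1"
    using surv_H[of r] cdf_eq_one_at_tau[of "distr M borel C"] C_rv by (simp add: Fc_def)
  have growth: "LIM n sequentially. real n * (1 - H (r - \<epsilon> / sqrt (real n))) :> at_top"
    if "0 < \<epsilon>" for \<epsilon>
  proof (rule filterlim_at_top_mono)
    have "LIM n sequentially. real n * (1 - Fc (r - \<epsilon> / sqrt (real n))) :> at_top"
      using cond that r by (simp add: Fc_def survival_def tendsto_PInfty_eq_at_top)
    then show "LIM n sequentially. (1 - p) * (real n * (1 - Fc (r - \<epsilon> / sqrt (real n)))) :> at_top"
      using p by (intro filterlim_tendsto_pos_mult_at_top[OF tendsto_const]) auto
    show "\<forall>\<^sub>F n in sequentially. (1 - p) * (real n * (1 - Fc (r - \<epsilon> / sqrt (real n))))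
      \<le> real n * (1 - H (r - \<epsilon> / sqrt (real n)))"
      by (intro always_eventually allI) (metis H_lower mult.left_commute mult_left_mono of_nat_0_le_iff)
  qed
  have "cdf (distr M borel (Ys i)) = H" for i
    using Ys_dist unfolding H_def Y_def by simp
  from sqrt_scaled_max_deviation_tendsto_zero[OF Ys_indep this \<open>H r = 1\<close> growth]
  show ?thesis
    using tau_H tau_fin r unfolding H_def Fc_def Y_def by simp
qed

end
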